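(* For all positive integers $d,k$ and every real $q\ge 1$ there exists $q'_0$ such that for every $q'\ge q'_0$ the following holds. Let $X$ be a subset of $\mathbb Q^d_q \cap B^d(\mathbf 0, 2k)$. Then for any $\mathbf x \in CH(X) \cap \mathbb Q_q^d$ there exist $\lambda_1, \dots, \lambda_r \geq 0$ and $\mathbf x_1, \dots, \mathbf x_r \in X$ such that $r \leq d+1$, each $\lambda_j$ is $q'$-rational, $\sum_{j \in [r]} \lambda_{j} =1$, and $\mathbf x = \sum_{j \in [r]} \lambda_j \mathbf x_j$.
   Context: A real number $x$ is $q$-rational if $x=a/b$ for integers $a,b$ with $1\le b\le q$. $\mathbb Q^d_q$ is the set of points of $\mathbb R^d$ all of whose coordinates are $q$-rational. $B^d(\mathbf x,r)=\{\mathbf z\in\mathbb R^d:\|\mathbf z-\mathbf x\|\le r\}$. $CH(X)$ is the convex hull of $X$, i.e. the set of finite convex combinations $\sum_j\lambda_j\mathbf x_j$ with $\mathbf x_j\in X$, $\lambda_j\in[0,1]$, $\sum_j\lambda_j=1$. *)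

theory Defs
  imports "HOL-Analysis.Analysis"
begin

definition q_rational :: "real \<Rightarrow> real \<Rightarrow> bool" where
  "q_rational q x \<longleftrightarrow> (\<exists>a b :: int. 1 \<le> b \<and> real_of_int b \<le> q \<and> x = real_of_int a / real_of_int b)"

definition rat_points :: "real \<Rightarrow> (real ^ 'n) set" where
  "rat_points q = {x. \<forall>i. q_rational q (x $ i)}"

end

theory Submission
  imports Defs
begin

text \<open>
  For a fixed q there are only finitely many q-rational points in the ball, hence only
  finitely many pairs (X, x) to consider, and it suffices to find for each of them one
  representation with rational weights. By Carath\'eodory, x lies in the convex hull of an
  affinely independent subset of X, whose at most d+1 points have rational coordinates.
  The barycentric weights of x are then rational: a \<open>\<rat>\<close>-linear functional f on \<open>\<real>\<close>
  with f 1 = 1 that kills an irrational weight would turn the weights into a second,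
  different affine representation of the rational point x.
\<close>

lemma q_rational_mono: "q_rational q x \<Longrightarrow> q \<le> q' \<Longrightarrow> q_rational q' x"
  unfolding q_rational_def by fastforce

lemma q_rational_imp_Rats: "q_rational q x \<Longrightarrow> x \<in> \<rat>"
  unfolding q_rational_def by (auto intro!: Rats_divide Rats_of_int)

lemma Rats_imp_ex_q_rational:
  assumes "x \<in> \<rat>"
  shows "\<exists>q. q_rational q x"
proof -
  obtain a b where "b > 0" "x = of_int a / of_int b"
    using assms by (rule Rats_cases') blast
  then have "q_rational (real_of_int b) x"
    unfolding q_rational_def by (intro exI[of _ a] exI[of _ b]) auto
  then show ?thesis by blast
qed

lemma finite_bounded_q_rational: "finite {x. q_rational q x \<and> \<bar>x\<bar> \<le> R}"
proof -
  define M where "M = \<lceil>R * q\<rceil>"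
  have "{x. q_rational q x \<and> \<bar>x\<bar> \<le> R}
          \<subseteq> (\<lambda>(a, b). real_of_int a / real_of_int b) ` ({-M..M} \<times> {1..\<lceil>q\<rceil>})"
  proof
    fix x assume "x \<in> {x. q_rational q x \<and> \<bar>x\<bar> \<le> R}"
    then obtain a b :: int where ab: "1 \<le> b" "real_of_int b \<le> q" "x = a / b" "\<bar>x\<bar> \<le> R"
      unfolding q_rational_def by auto
    have "\<bar>real_of_int a\<bar> = \<bar>x\<bar> * b"
      using ab by (simp add: abs_mult)
    also have "\<dots> \<le> R * q"
      using ab abs_ge_zero[of x] by (intro mult_mono) linarith+
    finally have "\<bar>a\<bar> \<le> M"
      unfolding M_def by linarith
    moreover have "b \<le> \<lceil>q\<rceil>"
      using ab by linarith
    ultimately show "x \<in> (\<lambda>(a, b). real_of_int a / real_of_int b) ` ({-M..M} \<times> {1..\<lceil>q\<rceil>})"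
      using ab by (intro image_eqI[of _ _ "(a, b)"]) auto
  qed
  then show ?thesis
    by (rule finite_subset) auto
qed

lemma finite_rat_points_cball: "finite (rat_points q \<inter> cball (0 :: real ^ 'n) R)"
proof -
  define T where "T = {x. q_rational q x \<and> \<bar>x\<bar> \<le> R}"
  have "rat_points q \<inter> cball (0 :: real ^ 'n) R \<subseteq> vec_lambda ` (UNIV \<rightarrow> T)"
  proof
    fix x :: "real ^ 'n" assume x: "x \<in> rat_points q \<inter> cball 0 R"
    have "(\<lambda>i. x $ i) \<in> UNIV \<rightarrow> T"
      using x component_le_norm_cart[of x] unfolding T_def rat_points_def
      by (auto intro: order_trans)
    then show "x \<in> vec_lambda ` (UNIV \<rightarrow> T)"
      by (intro image_eqI[of _ _ "\<lambda>i. x $ i"]) auto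
  qed
  moreover have "finite ((UNIV :: 'n set) \<rightarrow> T)"
    using finite_PiE[of "UNIV :: 'n set" "\<lambda>_. T"] finite_bounded_q_rational[of q R]
    unfolding T_def by (simp add: PiE_UNIV_domain)
  ultimately show ?thesis
    by (meson finite_imageI finite_subset)
qed

lemma finite_uniform_threshold:
  fixes Q :: "'a \<Rightarrow> 'b :: linorder \<Rightarrow> bool"
  assumes "finite P" and "\<And>p. p \<in> P \<Longrightarrow> \<exists>N. Q p N"
    and mono: "\<And>p N N'. Q p N \<Longrightarrow> N \<le> N' \<Longrightarrow> Q p N'"
  shows "\<exists>N. \<forall>p\<in>P. Q p N"
  using assms(1,2)
proof (induction P rule: finite_induct)
  case (insert a F)
  then obtain N1 N2 where "\<forall>p\<in>F. Q p N1" "Q a N2"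
    by blast
  then show ?case
    using mono[of _ N1 "max N1 N2"] mono[of a N2 "max N1 N2"] by auto
qed simp

lemma affine_dependent_convex_hull_remove:
  fixes S :: "'a :: real_vector set"
  assumes S: "finite S" and dep: "affine_dependent S" and x: "x \<in> convex hull S"
  shows "\<exists>a\<in>S. x \<in> convex hull (S - {a})"
proof -
  obtain u where u: "\<forall>v\<in>S. 0 \<le> u v" "sum u S = 1" "(\<Sum>v\<in>S. u v *\<^sub>R v) = x"
    using x convex_hull_finite[OF S] by blast
  obtain w where w: "sum w S = 0" "\<exists>v\<in>S. w v \<noteq> 0" "(\<Sum>v\<in>S. w v *\<^sub>R v) = 0"
    using dep affine_dependent_explicit_finite[OF S] by blast
  \<comment> \<open>move from u along the direction w until the first weight vanishes\<close>
  define I where "I = (\<lambda>v. u v / - w v) ` {v\<in>S. w v < 0}"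
  define t where "t = Min I"
  have "\<exists>v\<in>S. w v < 0"
    using w S by (smt (verit, best) sum_pos2)
  then have "finite I" "I \<noteq> {}"
    using S unfolding I_def by auto
  then have "t \<in> I"
    unfolding t_def by (rule Min_in)
  then obtain a where a: "a \<in> S" "w a < 0" "t = u a / - w a"
    unfolding I_def by blast
  have "0 \<le> t"
    using a u(1) by (simp add: divide_nonneg_neg)
  have nonneg: "0 \<le> u v + t * w v" if "v \<in> S" for v
  proof (cases "w v < 0")
    case True
    then have "t \<le> u v / - w v"
      using that \<open>finite I\<close> unfolding t_def I_def by (auto intro: Min_le)
    then show ?thesis
      unfolding real_0_le_add_iff using True neg_le_minus_divide_eq by auto
  qed (use that u(1) \<open>0 \<le> t\<close> in auto)
  have zero: "u a + t * w a = 0"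
    using a by simp
  have remove: "\<And>f :: 'a \<Rightarrow> 'b :: ab_group_add. sum f (S - {a}) = sum f S - f a"
    unfolding sum.remove[OF S \<open>a \<in> S\<close>] by auto
  have "(\<Sum>v\<in>S. u v + t * w v) = 1"
    using u(2) w(1) by (simp add: sum.distrib flip: sum_distrib_left)
  then have "(\<Sum>v\<in>S - {a}. u v + t * w v) = 1"
    using zero by (simp add: remove)
  moreover have "(\<Sum>v\<in>S. (u v + t * w v) *\<^sub>R v) = x"
    using u(3) w(3)
    by (simp add: scaleR_left_distrib sum.distrib flip: scaleR_scaleR scaleR_right.sum)
  then have "(\<Sum>v\<in>S - {a}. (u v + t * w v) *\<^sub>R v) = x"
    using zero by (simp add: remove)
  ultimately have "x \<in> convex hull (S - {a})"
    using nonneg S by (subst convex_hull_finite) (auto intro!: exI[of _ "\<lambda>v. u v + t * w v"])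
  then show ?thesis
    using a by blast
qed

lemma convex_hull_affine_independent_subset:
  fixes S :: "'a :: real_vector set"
  assumes "finite S" and "x \<in> convex hull S"
  shows "\<exists>T\<subseteq>S. \<not> affine_dependent T \<and> x \<in> convex hull T"
  using assms
proof (induction S rule: finite_psubset_induct)
  case (psubset S)
  show ?case
  proof (cases "affine_dependent S")
    case True
    then obtain a where "a \<in> S" "x \<in> convex hull (S - {a})"
      using affine_dependent_convex_hull_remove psubset.prems psubset.hyps by blast
    then obtain T where "T \<subseteq> S - {a}" "\<not> affine_dependent T" "x \<in> convex hull T"
      using psubset.IH[of "S - {a}"] psubset.hyps by blast
    then show ?thesis
      by blast
  qed (use psubset.prems in blast)
qed

lemma caratheodory_affine_independent:
  fixes X :: "'a :: euclidean_space set"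
  assumes "x \<in> convex hull X"
  obtains T where "T \<subseteq> X" "finite T" "\<not> affine_dependent T" "card T \<le> DIM('a) + 1"
    "x \<in> convex hull T"
proof -
  have "\<exists>S. finite S \<and> S \<subseteq> X \<and> card S \<le> DIM('a) + 1 \<and> x \<in> convex hull S"
    using assms by (subst (asm) caratheodory) (simp only: mem_Collect_eq)
  then obtain S where S: "finite S" "S \<subseteq> X" "x \<in> convex hull S"
    by blast
  obtain T where T: "T \<subseteq> S" "\<not> affine_dependent T" "x \<in> convex hull T"
    using convex_hull_affine_independent_subset[OF S(1,3)] by blast
  have "finite T"
    using T(2) by (rule aff_independent_finite)
  moreover have "card T \<le> DIM('a) + 1"
    using affine_dependent_biggerset[OF \<open>finite T\<close>] T(2) by linarith
  ultimately show thesis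
    using that T S(2) by blast
qed

lemma affine_independent_coefficients_unique:
  fixes S :: "'a :: real_vector set"
  assumes S: "finite S" "\<not> affine_dependent S"
    and "sum u S = 1" "sum w S = 1" "(\<Sum>v\<in>S. u v *\<^sub>R v) = (\<Sum>v\<in>S. w v *\<^sub>R v)"
    and "v \<in> S"
  shows "u v = w v"
proof (rule ccontr)
  assume "u v \<noteq> w v"
  with assms have "affine_dependent S"
    unfolding affine_dependent_explicit_finite[OF S(1)]
    by (intro exI[of _ "\<lambda>v. u v - w v"])
       (auto simp: sum_subtractf scaleR_diff_left)
  with S(2) show False ..
qed

lemma ex_Rats_linear_functional_vanishing:
  fixes c :: real
  assumes "c \<notin> \<rat>"
  obtains f :: "real \<Rightarrow> real"
  where "Modules.additive f" "\<And>r x. r \<in> \<rat> \<Longrightarrow> f (r * x) = r * f x" "f 1 = 1" "f c = 0"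
proof -
  define s where "s = (\<lambda>(r :: rat) (x :: real). of_rat r * x)"
  interpret V: vector_space_pair s s
    unfolding vector_space_pair_def vector_space_def s_def
    by (auto simp: algebra_simps of_rat_add of_rat_mult)
  have "V.vs1.independent {1 :: real}"
    using V.vs1.independent_insertI[OF _ V.vs1.independent_empty] by simp
  moreover have "c \<notin> V.vs1.span {1}"
    using assms unfolding V.vs1.span_singleton by (auto simp: s_def)
  ultimately have indep: "V.vs1.independent {c, 1}"
    by (rule V.vs1.independent_insertI[rotated])
  define f where "f = V.construct {c, 1} (\<lambda>x. if x = 1 then 1 else 0)"
  have "Vector_Spaces.linear s s f"
    unfolding f_def by (rule V.linear_construct[OF indep])
  then have add: "f (x + y) = f x + f y" and scale: "f (s r x) = s r (f x)" for x y r
    unfolding Vector_Spaces.linear_iff by auto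
  show thesis
  proof
    show "Modules.additive f"
      by unfold_locales (rule add)
    show "f (r * x) = r * f x" if "r \<in> \<rat>" for r x
      using that scale by (auto simp: s_def elim: Rats_cases)
    have "c \<noteq> 1"
      using assms by auto
    then show "f 1 = 1" "f c = 0"
      unfolding f_def using V.construct_basis[OF indep] by auto
  qed
qed

lemma affine_independent_rational_coefficients:
  fixes S :: "(real ^ 'n) set" and x :: "real ^ 'n"
  assumes S: "finite S" "\<not> affine_dependent S" and S_rat: "\<And>v i. v \<in> S \<Longrightarrow> v $ i \<in> \<rat>"
    and x_rat: "\<And>i. x $ i \<in> \<rat>"
    and u: "sum u S = 1" "(\<Sum>v\<in>S. u v *\<^sub>R v) = x"
    and "v \<in> S"
  shows "u v \<in> \<rat>"
proof (rule ccontr)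
  assume "u v \<notin> \<rat>"
  obtain f where f: "Modules.additive f" "\<And>r x. r \<in> \<rat> \<Longrightarrow> f (r * x) = r * f x"
    "f 1 = 1" "f (u v) = 0"
    using ex_Rats_linear_functional_vanishing[OF \<open>u v \<notin> \<rat>\<close>] by blast
  have f_Rats: "f r = r" if "r \<in> \<rat>" for r
    using f(2)[OF that, of 1] f(3) by simp
  have "sum (f \<circ> u) S = 1"
    using f(3) u(1) additive.sum[OF f(1), of u S] by simp
  moreover have "(\<Sum>y\<in>S. (f \<circ> u) y *\<^sub>R y) = x"
  proof (rule vec_eq_iff[THEN iffD2], intro allI)
    fix i
    have "(\<Sum>y\<in>S. (f \<circ> u) y *\<^sub>R y) $ i = (\<Sum>y\<in>S. f (y $ i * u y))"
      unfolding sum_component by (intro sum.cong) (simp_all add: S_rat f(2))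
    also have "\<dots> = f (x $ i)"
      using u(2) additive.sum[OF f(1), of "\<lambda>y. y $ i * u y" S] by (auto simp: mult.commute)
    also have "\<dots> = x $ i"
      using f_Rats x_rat by blast
    finally show "(\<Sum>y\<in>S. (f \<circ> u) y *\<^sub>R y) $ i = x $ i" .
  qed
  ultimately have "u v = f (u v)"
    using affine_independent_coefficients_unique[OF S u(1) _ _ \<open>v \<in> S\<close>, of "f \<circ> u"] u(2)
    by simp
  then show False
    using \<open>u v \<notin> \<rat>\<close> f(4) by simp
qed

definition rational_caratheodory_repr :: "real \<Rightarrow> (real ^ 'n) set \<Rightarrow> real ^ 'n \<Rightarrow> bool" where
  "rational_caratheodory_repr q' X x \<longleftrightarrow>
     (\<exists>(r :: nat) (l :: nat \<Rightarrow> real) (xs :: nat \<Rightarrow> real ^ 'n).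
        r \<le> CARD('n) + 1 \<and>
        (\<forall>j < r. l j \<ge> 0 \<and> q_rational q' (l j) \<and> xs j \<in> X) \<and>
        (\<Sum>j<r. l j) = 1 \<and> x = (\<Sum>j<r. l j *\<^sub>R xs j))"

lemma rational_caratheodory_repr_mono:
  "rational_caratheodory_repr q X x \<Longrightarrow> q \<le> q' \<Longrightarrow> rational_caratheodory_repr q' X x"
  unfolding rational_caratheodory_repr_def by (blast intro: q_rational_mono)

lemma rational_caratheodory_repr_of_finite_set:
  fixes S :: "(real ^ 'n) set"
  assumes "finite S" "S \<subseteq> X" "card S \<le> CARD('n) + 1"
    and "\<And>v. v \<in> S \<Longrightarrow> 0 \<le> u v \<and> q_rational q' (u v)"
    and "sum u S = 1" "(\<Sum>v\<in>S. u v *\<^sub>R v) = x"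
  shows "rational_caratheodory_repr q' X x"
proof -
  obtain h where h: "bij_betw h {..<card S} S"
    using ex_bij_betw_nat_finite[OF \<open>finite S\<close>] by (auto simp: lessThan_atLeast0)
  then have "h j \<in> S" if "j < card S" for j
    using that bij_betwE by blast
  then show ?thesis
    unfolding rational_caratheodory_repr_def using assms
    by (intro exI[of _ "card S"] exI[of _ "u \<circ> h"] exI[of _ h])
       (auto simp: sum.reindex_bij_betw[OF h, of u] sum.reindex_bij_betw[OF h, of "\<lambda>v. u v *\<^sub>R v"])
qed

lemma ex_rational_caratheodory_repr:
  fixes X :: "(real ^ 'n) set"
  assumes X_rat: "\<And>v i. v \<in> X \<Longrightarrow> v $ i \<in> \<rat>" and x_rat: "\<And>i. x $ i \<in> \<rat>"
    and "x \<in> convex hull X"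
  shows "\<exists>q'. rational_caratheodory_repr q' X x"
proof -
  obtain S where S: "S \<subseteq> X" "finite S" "\<not> affine_dependent S" "card S \<le> CARD('n) + 1"
    "x \<in> convex hull S"
    using caratheodory_affine_independent[OF \<open>x \<in> convex hull X\<close>] by auto
  then obtain u where u: "\<forall>v\<in>S. 0 \<le> u v" "sum u S = 1" "(\<Sum>v\<in>S. u v *\<^sub>R v) = x"
    using convex_hull_finite by blast
  have "\<exists>q'. q_rational q' (u v)" if "v \<in> S" for v
    using affine_independent_rational_coefficients[OF S(2,3) _ x_rat u(2,3) that] S(1) X_rat
      Rats_imp_ex_q_rational by blast
  then obtain q' where "\<forall>v\<in>S. q_rational q' (u v)"
    using finite_uniform_threshold[OF \<open>finite S\<close>, of "\<lambda>v q'. q_rational q' (u v)"]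
      q_rational_mono by blast
  then show ?thesis
    using rational_caratheodory_repr_of_finite_set[OF S(2,1,4) _ u(2,3)] u(1) by blast
qed

theorem proposition3p2:
  fixes k :: nat and q :: real
  assumes "k \<ge> 1" and "q \<ge> 1"
  shows "\<exists>q0 :: real. \<forall>q' \<ge> q0. \<forall>X :: (real ^ 'n) set.
           X \<subseteq> rat_points q \<inter> cball 0 (2 * real k) \<longrightarrow>
           (\<forall>x \<in> convex hull X \<inter> rat_points q.
              \<exists>(r :: nat) (l :: nat \<Rightarrow> real) (xs :: nat \<Rightarrow> real ^ 'n).
                 r \<le> CARD('n) + 1 \<and>
                 (\<forall>j < r. l j \<ge> 0 \<and> q_rational q' (l j) \<and> xs j \<in> X) \<and>
                 (\<Sum>j<r. l j) = 1 \<and>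
                 x = (\<Sum>j<r. l j *\<^sub>R xs j))"
proof -
  define S where "S = rat_points q \<inter> cball (0 :: real ^ 'n) (2 * real k)"
  have "finite (Pow S \<times> S)"
    unfolding S_def using finite_rat_points_cball by blast
  moreover have "\<exists>q'. x \<in> convex hull X \<longrightarrow> rational_caratheodory_repr q' X x"
    if "(X, x) \<in> Pow S \<times> S" for X x
    using that ex_rational_caratheodory_repr[of X x]
    unfolding S_def rat_points_def by (blast dest: q_rational_imp_Rats)
  ultimately obtain q0 where
    q0: "\<forall>(X, x) \<in> Pow S \<times> S. x \<in> convex hull X \<longrightarrow> rational_caratheodory_repr q0 X x"
    using finite_uniform_threshold[of "Pow S \<times> S"
        "\<lambda>(X, x) q'. x \<in> convex hull X \<longrightarrow> rational_caratheodory_repr q' X x"]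
      rational_caratheodory_repr_mono by fastforce
  have "rational_caratheodory_repr q' X x"
    if "q0 \<le> q'" "X \<subseteq> S" "x \<in> convex hull X \<inter> rat_points q" for q' X x
  proof -
    have "convex hull X \<subseteq> cball 0 (2 * real k)"
      using \<open>X \<subseteq> S\<close> unfolding S_def by (intro hull_minimal) (auto simp: convex_cball)
    then show ?thesis
      using that q0 rational_caratheodory_repr_mono unfolding S_def by blast
  qed
  then show ?thesis
    unfolding rational_caratheodory_repr_def S_def by blast
qed

end
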